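(* Consider the inexact value iteration $\hat P_{i+1}=\mathcal R(\hat P_i,S)+\Delta_i$, $i\in\mathbb Z_+$, with $\hat P_0\in\mathbb S^n_+$ and disturbances $\Delta_i\in\mathbb S^n$, and let $\|\Delta\|_\infty=\sup_{i\in\mathbb Z_+}\|\Delta_i\|_2$. There exist a $\mathcal{KL}$-function $\beta$ and a $\mathcal K$-function $\gamma$ such that for every disturbance sequence with $\|\Delta\|_\infty<\lambda_{\min}(S)$, every $\hat P_0\in\mathbb S^n_+$ and every $i\in\mathbb Z_+$, $$\|\hat P_i-P^*\|_2\le\beta(\|\hat P_0-P^*\|_2,i)+\gamma(\|\Delta\|_\infty).$$
   Context: Let $n,m\ge 1$, $A\in\mathbb R^{n\times n}$, $B\in\mathbb R^{n\times m}$, $S\in\mathbb S^n_{++}$, $R\in\mathbb S^m_{++}$, with $(A,B)$ stabilizable. Here $\mathbb S^n$, $\mathbb S^n_+$, $\mathbb S^n_{++}$ denote the real symmetric, symmetric positive semidefinite, and symmetric positive definite $n\times n$ matrices; $\|\cdot\|_2$ is the spectral norm; $\lambda_{\min}$ is the smallest eigenvalue. For $P\in\mathbb S^n_+$ and $S'\in\mathbb S^n$, the Riccati operator is $\mathcal R(P,S')=A^\top PA-A^\top PB(R+B^\top PB)^{-1}B^\top PA+S'$. $P^*\in\mathbb S^n_{++}$ denotes the unique positive definite solution of $P=\mathcal R(P,S)$. A function $\gamma:\mathbb R_+\to\mathbb R_+$ is of class $\mathcal K$ if it is continuous, strictly increasing and $\gamma(0)=0$. A function $\beta:\mathbb R_+\times\mathbb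 Z_+\to\mathbb R_+$ is of class $\mathcal{KL}$ if $\beta(\cdot,i)$ is of class $\mathcal K$ for each fixed $i$, and $\beta(r,i)$ decreases to $0$ as $i\to\infty$ for each fixed $r\ge 0$. *)

theory Defs
  imports "HOL-Analysis.Analysis"
begin

definition symm_mat :: "real^'n^'n \<Rightarrow> bool" where
  "symm_mat M \<longleftrightarrow> transpose M = M"

definition psd_mat :: "real^'n^'n \<Rightarrow> bool" where
  "psd_mat M \<longleftrightarrow> symm_mat M \<and> (\<forall>x. 0 \<le> x \<bullet> (M *v x))"

definition pd_mat :: "real^'n^'n \<Rightarrow> bool" where
  "pd_mat M \<longleftrightarrow> symm_mat M \<and> (\<forall>x. x \<noteq> 0 \<longrightarrow> 0 < x \<bullet> (M *v x))"

definition spec_norm :: "real^'n^'m \<Rightarrow> real" where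
  "spec_norm M = onorm (\<lambda>x. M *v x)"

definition lambda_min :: "real^'n^'n \<Rightarrow> real" where
  "lambda_min M = Min {l. \<exists>v. v \<noteq> 0 \<and> M *v v = l *\<^sub>R v}"

definition cmat :: "real^'n^'m \<Rightarrow> complex^'n^'m" where
  "cmat M = (\<chi> i j. complex_of_real (M $ i $ j))"

definition schur_stable :: "real^'n^'n \<Rightarrow> bool" where
  "schur_stable M \<longleftrightarrow>
     (\<forall>(l::complex) v. v \<noteq> 0 \<and> cmat M *v v = l *s v \<longrightarrow> cmod l < 1)"

definition stabilizable :: "real^'n^'n \<Rightarrow> real^'m^'n \<Rightarrow> bool" where
  "stabilizable A B \<longleftrightarrow> (\<exists>K :: real^'n^'m. schur_stable (A + B ** K))"

definition riccati ::
  "real^'n^'n \<Rightarrow> real^'m^'n \<Rightarrow> real^'m^'m \<Rightarrow> real^'n^'n \<Rightarrow> real^'n^'n \<Rightarrow> real^'n^'n" where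
  "riccati A B R P S' =
     transpose A ** P ** A
     - transpose A ** P ** B ** matrix_inv (R + transpose B ** P ** B) ** transpose B ** P ** A
     + S'"

definition class_K :: "(real \<Rightarrow> real) \<Rightarrow> bool" where
  "class_K g \<longleftrightarrow> continuous_on {0..} g \<and> strict_mono_on {0..} g \<and> g 0 = 0
                 \<and> (\<forall>r\<ge>0. 0 \<le> g r)"

definition class_KL :: "(real \<Rightarrow> nat \<Rightarrow> real) \<Rightarrow> bool" where
  "class_KL b \<longleftrightarrow> (\<forall>i. class_K (\<lambda>r. b r i))
                  \<and> (\<forall>r\<ge>0. antimono (\<lambda>i. b r i) \<and> (\<lambda>i. b r i) \<longlonglongrightarrow> 0)"

end

theory Submission
  imports Defs
begin

(* The Riccati operator is the optimal value of a one-step LQ problem: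
   x' R(P,S) x = min_u (Ax+Bu)' P (Ax+Bu) + u' R u + x' S x.  Evaluating the cost of
   P at the minimiser for Pstar and vice versa shows that if (1-a) Pstar <= P <= (1+a) Pstar
   in the Loewner order, then R(P,S) satisfies the same bounds with a replaced by (1-kappa) a,
   where kappa Pstar <= S.  Hence the relative error a_i of the inexact iteration obeys
   a_(i+1) <= (1-kappa) a_i + |Delta|/lambda_min(Pstar): the initial error decays geometrically
   and the disturbance contributes a term linear in |Delta|.  Since R(P,S) >= S, the bound
   |Delta| < lambda_min(S) keeps every iterate positive semidefinite, which the minimisation
   needs. *)

section \<open>Quadratic forms, smallest eigenvalue and spectral norm\<close>

abbreviation qform :: "real^'n^'n \<Rightarrow> real^'n \<Rightarrow> real" where
  "qform M x \<equiv> x \<bullet> (M *v x)"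

lemma qform_add: "qform (M + N) x = qform M x + qform N x"
  by (simp add: matrix_vector_mult_add_rdistrib inner_add_right)

lemma qform_diff: "qform (M - N) x = qform M x - qform N x"
  by (simp add: matrix_vector_mult_diff_rdistrib inner_diff_right)

lemma transpose_add: "transpose (M + N) = transpose M + transpose (N::'a::semiring_1^'n^'m)"
  by (simp add: transpose_def vec_eq_iff)

lemma transpose_diff: "transpose (M - N) = transpose M - transpose (N::'a::ring_1^'n^'m)"
  by (simp add: transpose_def vec_eq_iff)

lemma symm_mat_inner_swap: "symm_mat M \<Longrightarrow> x \<bullet> (M *v y) = y \<bullet> (M *v x)"
  by (metis dot_lmul_matrix inner_commute symm_mat_def vector_transpose_matrix)

lemma psd_mat_if_pd_mat: "pd_mat M \<Longrightarrow> psd_mat M"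
  unfolding pd_mat_def psd_mat_def by (metis inner_zero_left order.refl less_imp_le)

lemma qform_nonneg_if_psd_mat: "psd_mat M \<Longrightarrow> 0 \<le> qform M x"
  by (simp add: psd_mat_def)

lemma matrix_inv_mult:
  assumes "invertible (G::real^'n^'n)"
  shows "G ** matrix_inv G = mat 1" "matrix_inv G ** G = mat 1"
  using someI_ex[OF assms[unfolded invertible_def]] unfolding matrix_inv_def by auto

lemma symm_mat_matrix_inv:
  assumes "invertible (G::real^'n^'n)" "symm_mat G"
  shows "symm_mat (matrix_inv G)"
proof -
  let ?H = "matrix_inv G"
  have "transpose ?H ** G = mat 1"
    using arg_cong[OF matrix_inv_mult(1)[OF assms(1)], of transpose] assms(2)
    by (simp add: matrix_transpose_mul symm_mat_def)
  then have "transpose ?H = ?H"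
    by (metis matrix_inv_mult(1)[OF assms(1)] matrix_mul_assoc matrix_mul_lid matrix_mul_rid)
  then show ?thesis unfolding symm_mat_def .
qed

lemma psd_qform_eq_0_imp_mult_eq_0:
  fixes N :: "real^'n^'n"
  assumes sN: "symm_mat N" and N: "\<forall>y. 0 \<le> qform N y" and v: "qform N v = 0"
  shows "N *v v = 0"
proof -
  define w where "w = N *v v"
  define c where "c = w \<bullet> w"
  define k where "k = qform N w"
  have k0: "0 \<le> k"
    using N unfolding k_def by simp
  have "v \<bullet> (N *v w) = w \<bullet> (N *v v)"
    using symm_mat_inner_swap[OF sN] by blast
  then have expand: "qform N (v + t *\<^sub>R w) = 2 * t * c + t\<^sup>2 * k" for t
    by (simp add: matrix_vector_right_distrib matrix_vector_mult_scaleR inner_add_left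
        inner_add_right v c_def k_def w_def power2_eq_square algebra_simps)
  define t where "t = - c / (k + 1)"
  \<comment> \<open>t \<mapsto> qform N (v + t w) is nonnegative and vanishes at 0, so its slope 2c there is 0\<close>
  have "0 \<le> 2 * t * c + t\<^sup>2 * k"
    using N expand[of t] by metis
  then have "0 \<le> (2 * t * c + t\<^sup>2 * k) * (k + 1)\<^sup>2"
    by simp
  also have "\<dots> = 2 * c * (t * (k + 1)) * (k + 1) + k * (t * (k + 1))\<^sup>2"
    by (simp add: power2_eq_square algebra_simps)
  also have "t * (k + 1) = - c"
    using k0 by (simp add: t_def)
  also have "2 * c * (- c) * (k + 1) + k * (- c)\<^sup>2 = - (c\<^sup>2 * (k + 2))"
    by (simp add: power2_eq_square algebra_simps)
  finally have "c = 0"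
    using k0 by (simp add: mult_le_0_iff)
  then show ?thesis
    unfolding c_def w_def by simp
qed

lemma symm_mat_min_eigenpair:
  fixes M :: "real^'n^'n"
  assumes sM: "symm_mat M"
  obtains m v where "v \<noteq> 0" "M *v v = m *\<^sub>R v" "\<forall>x. m * (x \<bullet> x) \<le> qform M x"
proof -
  have "continuous_on (sphere 0 1) (qform M)"
    by (intro continuous_intros linear_continuous_on matrix_vector_mul_bounded_linear)
  moreover have "sphere (0::real^'n) 1 \<noteq> {}"
    by (simp add: sphere_eq_empty)
  ultimately obtain v where "v \<in> sphere 0 1" "\<And>y. y \<in> sphere 0 1 \<Longrightarrow> qform M v \<le> qform M y"
    using continuous_attains_inf[OF compact_sphere] by blast
  then have v: "norm v = 1" and vmin: "\<And>y. norm y = 1 \<Longrightarrow> qform M v \<le> qform M y"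
    by auto
  define m where "m = qform M v"
  have bound: "m * (x \<bullet> x) \<le> qform M x" for x
  proof (cases "x = 0")
    case False
    have "norm ((1 / norm x) *\<^sub>R x) = 1"
      using False by simp
    then have "m \<le> qform M ((1 / norm x) *\<^sub>R x)"
      unfolding m_def by (rule vmin)
    also have "\<dots> = qform M x / (norm x)\<^sup>2"
      by (simp add: matrix_vector_mult_scaleR power2_eq_square)
    finally have "m * (norm x)\<^sup>2 \<le> qform M x"
      using False by (simp add: field_simps)
    then show ?thesis
      by (simp add: power2_norm_eq_inner)
  qed simp
  define N where "N = M - m *\<^sub>R mat 1"
  have Nx: "N *v x = M *v x - m *\<^sub>R x" for x
    by (simp add: N_def matrix_vector_mult_diff_rdistrib scaleR_matrix_vector_assoc[symmetric])
  have "symm_mat N"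
    using sM by (simp add: N_def symm_mat_def transpose_diff transpose_scalar)
  moreover have "\<forall>y. 0 \<le> qform N y"
    using bound by (simp add: Nx inner_diff_right)
  moreover have "qform N v = 0"
    using v by (simp add: Nx inner_diff_right m_def power2_norm_eq_inner[symmetric])
  ultimately have "N *v v = 0"
    by (rule psd_qform_eq_0_imp_mult_eq_0)
  then have "M *v v = m *\<^sub>R v"
    by (simp add: Nx)
  moreover have "v \<noteq> 0"
    using v by auto
  ultimately show thesis
    using that bound by blast
qed

lemma finite_eigenvalues_symm_mat:
  fixes M :: "real^'n^'n"
  assumes sM: "symm_mat M"
  shows "finite {l. \<exists>v. v \<noteq> 0 \<and> M *v v = l *\<^sub>R v}" (is "finite ?E")
proof -
  define f where "f l = (SOME v. v \<noteq> 0 \<and> M *v v = l *\<^sub>R v)" for l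
  have f: "f l \<noteq> 0" "M *v f l = l *\<^sub>R f l" if "l \<in> ?E" for l
    using someI_ex[of "\<lambda>v. v \<noteq> 0 \<and> M *v v = l *\<^sub>R v"] that unfolding f_def by auto
  have orth: "f l1 \<bullet> f l2 = 0" if "l1 \<in> ?E" "l2 \<in> ?E" "l1 \<noteq> l2" for l1 l2
  proof -
    have "l1 * (f l1 \<bullet> f l2) = (M *v f l1) \<bullet> f l2"
      using f[OF that(1)] by simp
    also have "\<dots> = f l2 \<bullet> (M *v f l1)"
      by (rule inner_commute)
    also have "\<dots> = l2 * (f l1 \<bullet> f l2)"
      using f[OF that(2)] symm_mat_inner_swap[OF sM, of "f l2" "f l1"] by simp
    finally show ?thesis
      using that(3) by simp
  qed
  have inj: "inj_on f ?E"
  proof (rule inj_onI)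
    fix l1 l2 assume l: "l1 \<in> ?E" "l2 \<in> ?E" "f l1 = f l2"
    have "l1 *\<^sub>R f l1 = M *v f l2"
      using f(2)[OF l(1)] l(3) by simp
    also have "\<dots> = l2 *\<^sub>R f l1"
      using f(2)[OF l(2)] l(3) by simp
    finally show "l1 = l2"
      using f(1)[OF l(1)] by simp
  qed
  have "pairwise orthogonal (f ` ?E)"
  proof (rule pairwiseI)
    fix y z assume "y \<in> f ` ?E" "z \<in> f ` ?E" "y \<noteq> z"
    then show "orthogonal y z"
      unfolding orthogonal_def using orth by blast
  qed
  moreover have "0 \<notin> f ` ?E"
  proof
    assume "0 \<in> f ` ?E"
    then obtain l where l: "l \<in> ?E" "0 = f l"
      by blast
    show False
      using f(1)[OF l(1)] l(2) by simp
  qed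
  ultimately have "independent (f ` ?E)"
    by (rule pairwise_orthogonal_independent)
  then have "finite (f ` ?E)"
    by (rule finiteI_independent)
  then show ?thesis
    using finite_imageD inj by blast
qed

lemma lambda_min_symm_mat:
  fixes M :: "real^'n^'n"
  assumes sM: "symm_mat M"
  shows lambda_min_le_qform: "lambda_min M * (x \<bullet> x) \<le> qform M x"
    and lambda_min_eigenvalue: "\<exists>v. v \<noteq> 0 \<and> M *v v = lambda_min M *\<^sub>R v"
proof -
  obtain m v where v: "v \<noteq> 0" "M *v v = m *\<^sub>R v" and m: "\<forall>x. m * (x \<bullet> x) \<le> qform M x"
    using symm_mat_min_eigenpair[OF sM] by blast
  have "lambda_min M = m"
    unfolding lambda_min_def
  proof (rule Min_eqI[OF finite_eigenvalues_symm_mat[OF sM]])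
    fix l assume "l \<in> {l. \<exists>v. v \<noteq> 0 \<and> M *v v = l *\<^sub>R v}"
    then obtain w where "w \<noteq> 0" "M *v w = l *\<^sub>R w"
      by blast
    moreover have "m * (w \<bullet> w) \<le> qform M w"
      using m by blast
    ultimately show "m \<le> l"
      by simp
  qed (use v in blast)
  then show "lambda_min M * (x \<bullet> x) \<le> qform M x" "\<exists>v. v \<noteq> 0 \<and> M *v v = lambda_min M *\<^sub>R v"
    using m v by auto
qed

lemma lambda_min_pos:
  assumes "pd_mat M"
  shows "0 < lambda_min M"
proof -
  obtain v where v: "v \<noteq> 0" "M *v v = lambda_min M *\<^sub>R v"
    using assms lambda_min_eigenvalue by (auto simp: pd_mat_def)
  have "0 < qform M v"
    using assms v(1) by (simp add: pd_mat_def)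
  moreover have "0 < v \<bullet> v"
    using v(1) by simp
  ultimately show ?thesis
    using v(2) by (simp add: zero_less_mult_iff)
qed

lemma spec_norm_nonneg: "0 \<le> spec_norm (M::real^'n^'m)"
  unfolding spec_norm_def by (intro onorm_pos_le matrix_vector_mul_bounded_linear)

lemma norm_mult_le_spec_norm:
  fixes M :: "real^'n^'m" and x :: "real^'n"
  shows "norm (M *v x) \<le> spec_norm M * norm x"
  unfolding spec_norm_def by (intro onorm matrix_vector_mul_bounded_linear)

lemma abs_qform_le_spec_norm:
  fixes M :: "real^'n^'n" and x :: "real^'n"
  shows "\<bar>qform M x\<bar> \<le> spec_norm M * (x \<bullet> x)"
proof -
  have "\<bar>qform M x\<bar> \<le> norm x * norm (M *v x)"
    by (rule Cauchy_Schwarz_ineq2)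
  also have "\<dots> \<le> norm x * (spec_norm M * norm x)"
    by (intro mult_left_mono norm_mult_le_spec_norm) auto
  also have "\<dots> = spec_norm M * (x \<bullet> x)"
    by (simp add: power2_norm_eq_inner[symmetric] power2_eq_square)
  finally show ?thesis .
qed

lemma spec_norm_pos:
  assumes "pd_mat M"
  shows "0 < spec_norm M"
proof -
  obtain v where v: "v \<noteq> 0" "M *v v = lambda_min M *\<^sub>R v"
    using assms lambda_min_eigenvalue by (auto simp: pd_mat_def)
  have "lambda_min M * norm v \<le> spec_norm M * norm v"
    using norm_mult_le_spec_norm[of M v] v lambda_min_pos[OF assms] by simp
  then have "lambda_min M \<le> spec_norm M"
    using v(1) by simp
  then show ?thesis
    using lambda_min_pos[OF assms] by linarith
qed

lemma symm_mat_polarization: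
  assumes "symm_mat M"
  shows "qform M (x + y) - qform M (x - y) = 4 * (x \<bullet> (M *v y))"
  using symm_mat_inner_swap[OF assms, of y x]
  by (simp add: matrix_vector_right_distrib matrix_vector_mult_diff_distrib
      inner_add_left inner_add_right inner_diff_left inner_diff_right)

lemma spec_norm_le_if_abs_qform_le:
  fixes M :: "real^'n^'n"
  assumes sM: "symm_mat M" and c: "0 \<le> c" and M: "\<forall>x. \<bar>qform M x\<bar> \<le> c * (x \<bullet> x)"
  shows "spec_norm M \<le> c"
  unfolding spec_norm_def
proof (rule onorm_le)
  fix x :: "real^'n"
  show "norm (M *v x) \<le> c * norm x"
  proof (cases "M *v x = 0")
    case False
    \<comment> \<open>polarize with y, the vector M x rescaled to the length of x\<close>
    define y where "y = (norm x / norm (M *v x)) *\<^sub>R (M *v x)"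
    have "y \<bullet> y = x \<bullet> x"
      using False by (simp add: y_def power2_norm_eq_inner[symmetric] power2_eq_square)
    then have "c * ((x + y) \<bullet> (x + y)) + c * ((x - y) \<bullet> (x - y)) = 4 * (c * (x \<bullet> x))"
      by (simp add: inner_add_left inner_add_right inner_diff_left inner_diff_right
          inner_commute[of y x] algebra_simps)
    moreover have "x \<bullet> (M *v y) = norm x * norm (M *v x)"
      using False symm_mat_inner_swap[OF sM, of x y]
      by (simp add: y_def power2_norm_eq_inner[symmetric] power2_eq_square)
    ultimately have "norm x * norm (M *v x) \<le> c * (x \<bullet> x)"
      using symm_mat_polarization[OF sM, of x y] M[rule_format, of "x + y"] M[rule_format, of "x - y"]
      by linarith
    also have "\<dots> = norm x * (c * norm x)"
      by (simp add: power2_norm_eq_inner[symmetric] power2_eq_square)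
    moreover have "0 < norm x"
      using False by auto
    ultimately show ?thesis
      by simp
  qed (use c in simp)
qed

lemma abs_qform_le_div_lambda_min:
  assumes Q: "pd_mat Q" and D: "spec_norm D \<le> d"
  shows "\<bar>qform D x\<bar> \<le> d / lambda_min Q * qform Q x"
proof -
  have q: "0 < lambda_min Q" "lambda_min Q * (x \<bullet> x) \<le> qform Q x"
    using Q lambda_min_pos lambda_min_le_qform by (auto simp: pd_mat_def)
  have d: "0 \<le> d"
    using spec_norm_nonneg[of D] D by linarith
  have "\<bar>qform D x\<bar> \<le> d * (x \<bullet> x)"
    using abs_qform_le_spec_norm[of x D] mult_right_mono[OF D, of "x \<bullet> x"] by simp
  also have "\<dots> = d / lambda_min Q * (lambda_min Q * (x \<bullet> x))"
    using q(1) by simp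
  also have "\<dots> \<le> d / lambda_min Q * qform Q x"
    using q d by (intro mult_left_mono) auto
  finally show ?thesis .
qed

lemma qform_le_lambda_min_ratio:
  assumes S: "pd_mat S"
  shows "lambda_min S / (lambda_min S + spec_norm Q) * qform Q x \<le> qform S x"
proof -
  define s p where "s = lambda_min S" and "p = spec_norm Q"
  have "0 < s" "0 \<le> p"
    using lambda_min_pos[OF S] spec_norm_nonneg[of Q] by (simp_all add: s_def p_def)
  then have \<kappa>: "0 \<le> s / (s + p)" "s / (s + p) * p \<le> s"
    by (simp_all add: field_simps)
  have "s / (s + p) * qform Q x \<le> s / (s + p) * (p * (x \<bullet> x))"
    using \<kappa>(1) abs_qform_le_spec_norm[of x Q] by (intro mult_left_mono) (auto simp: p_def)
  also have "\<dots> \<le> s * (x \<bullet> x)"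
    using \<kappa>(2) mult_right_mono[of "s / (s + p) * p" s "x \<bullet> x"] by simp
  also have "\<dots> \<le> qform S x"
    using S lambda_min_le_qform by (auto simp: s_def pd_mat_def)
  finally show ?thesis
    by (simp add: s_def p_def)
qed

section \<open>Relative closeness in the Loewner order\<close>

definition rel_close :: "real \<Rightarrow> real^'n^'n \<Rightarrow> real^'n^'n \<Rightarrow> bool" where
  "rel_close a Q P \<longleftrightarrow> (\<forall>x. \<bar>qform (P - Q) x\<bar> \<le> a * qform Q x)"

lemma rel_close_iff:
  "rel_close a Q P \<longleftrightarrow>
    (\<forall>x. (1 - a) * qform Q x \<le> qform P x \<and> qform P x \<le> (1 + a) * qform Q x)"
  by (auto simp: rel_close_def qform_diff abs_le_iff algebra_simps)

lemma rel_close_mono: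
  assumes "rel_close a Q P" "a \<le> b" "psd_mat Q"
  shows "rel_close b Q P"
  unfolding rel_close_def
proof
  fix x
  have "a * qform Q x \<le> b * qform Q x"
    using assms(2,3) by (intro mult_right_mono qform_nonneg_if_psd_mat)
  then show "\<bar>qform (P - Q) x\<bar> \<le> b * qform Q x"
    using assms(1) unfolding rel_close_def by (meson order.trans)
qed

lemma rel_close_add:
  assumes "rel_close a Q P" and "\<forall>x. \<bar>qform E x\<bar> \<le> \<delta> * qform Q x"
  shows "rel_close (a + \<delta>) Q (P + E)"
  unfolding rel_close_def
proof
  fix x
  have "qform (P + E - Q) x = qform (P - Q) x + qform E x"
    by (simp add: qform_add qform_diff)
  then have "\<bar>qform (P + E - Q) x\<bar> \<le> \<bar>qform (P - Q) x\<bar> + \<bar>qform E x\<bar>"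
    by simp
  moreover have "\<bar>qform (P - Q) x\<bar> \<le> a * qform Q x"
    using assms(1) unfolding rel_close_def by blast
  moreover have "\<bar>qform E x\<bar> \<le> \<delta> * qform Q x"
    using assms(2) by blast
  ultimately show "\<bar>qform (P + E - Q) x\<bar> \<le> (a + \<delta>) * qform Q x"
    unfolding distrib_right by linarith
qed

lemma rel_close_spec_norm_div_lambda_min:
  assumes "pd_mat Q"
  shows "rel_close (spec_norm (P - Q) / lambda_min Q) Q P"
  using abs_qform_le_div_lambda_min[OF assms] unfolding rel_close_def by blast

lemma spec_norm_le_if_rel_close:
  assumes "symm_mat P" "symm_mat Q" "0 \<le> a" "rel_close a Q P"
  shows "spec_norm (P - Q) \<le> a * spec_norm Q"
proof (rule spec_norm_le_if_abs_qform_le)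
  show "symm_mat (P - Q)"
    using assms(1,2) by (simp add: symm_mat_def transpose_diff)
  show "0 \<le> a * spec_norm Q"
    using assms(3) spec_norm_nonneg[of Q] by simp
  show "\<forall>x. \<bar>qform (P - Q) x\<bar> \<le> a * spec_norm Q * (x \<bullet> x)"
  proof
    fix x
    have "\<bar>qform (P - Q) x\<bar> \<le> a * qform Q x"
      using assms(4) unfolding rel_close_def by blast
    also have "\<dots> \<le> a * (spec_norm Q * (x \<bullet> x))"
      using abs_qform_le_spec_norm[of x Q] assms(3) by (intro mult_left_mono) auto
    finally show "\<bar>qform (P - Q) x\<bar> \<le> a * spec_norm Q * (x \<bullet> x)"
      by (simp add: mult.assoc)
  qed
qed

section \<open>The Riccati operator as an optimal one-step cost\<close>

lemma qform_gain_matrix: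
  fixes P :: "real^'n^'n" and B :: "real^'m^'n" and R :: "real^'m^'m"
  shows "qform (R + transpose B ** P ** B) u = qform R u + qform P (B *v u)"
  by (simp add: matrix_vector_mult_add_rdistrib matrix_vector_mul_assoc[symmetric] inner_add_right
      dot_lmul_matrix inner_commute[of u] inner_commute[of "P *v (B *v u)"])

lemma invertible_gain_matrix:
  fixes P :: "real^'n^'n" and B :: "real^'m^'n" and R :: "real^'m^'m"
  assumes "pd_mat R" "psd_mat P"
  shows "invertible (R + transpose B ** P ** B)"
proof -
  let ?G = "R + transpose B ** P ** B"
  have "x = 0" if "?G *v x = 0" for x
  proof -
    have "qform R x + qform P (B *v x) = 0"
      using that by (simp flip: qform_gain_matrix)
    moreover have "0 \<le> qform P (B *v x)"
      using assms(2) by (rule qform_nonneg_if_psd_mat)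
    ultimately show "x = 0"
      using assms(1) unfolding pd_mat_def by force
  qed
  then show ?thesis
    using matrix_left_invertible_ker invertible_left_inverse by blast
qed

lemma symm_mat_gain_matrix:
  fixes P :: "real^'n^'n" and B :: "real^'m^'n" and R :: "real^'m^'m"
  assumes "symm_mat R" "symm_mat P"
  shows "symm_mat (R + transpose B ** P ** B)"
  using assms by (simp add: symm_mat_def transpose_add matrix_transpose_mul matrix_mul_assoc)

lemma symm_mat_riccati:
  fixes B :: "real^'m^'n" and R :: "real^'m^'m"
  assumes "pd_mat R" "psd_mat P" "symm_mat S'"
  shows "symm_mat (riccati A B R P S')"
proof -
  have "symm_mat R" "symm_mat P"
    using assms by (auto simp: pd_mat_def psd_mat_def)
  then have "symm_mat (matrix_inv (R + transpose B ** P ** B))"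
    by (intro symm_mat_matrix_inv invertible_gain_matrix symm_mat_gain_matrix assms)
  with \<open>symm_mat P\<close> \<open>symm_mat S'\<close> show ?thesis
    by (simp add: riccati_def symm_mat_def transpose_add transpose_diff matrix_transpose_mul
        matrix_mul_assoc)
qed

definition bellman_cost :: "real^'n^'n \<Rightarrow> real^'m^'n \<Rightarrow> real^'m^'m \<Rightarrow> real^'n^'n \<Rightarrow>
    real^'n^'n \<Rightarrow> real^'n \<Rightarrow> real^'m \<Rightarrow> real"
  where "bellman_cost A B R P S' x u = qform P (A *v x + B *v u) + qform R u + qform S' x"

lemma riccati_completion_of_squares:
  fixes A :: "real^'n^'n" and B :: "real^'m^'n" and R :: "real^'m^'m" and x :: "real^'n"
  assumes R: "pd_mat R" and P: "psd_mat P"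
  defines "G \<equiv> R + transpose B ** P ** B"
  defines "u\<^sub>0 \<equiv> - (matrix_inv G *v (transpose B *v (P *v (A *v x))))"
  shows "qform (riccati A B R P S') x + qform G (u - u\<^sub>0) = bellman_cost A B R P S' x u"
proof -
  define a where "a = A *v x"
  define g where "g = transpose B *v (P *v a)"
  define w where "w = matrix_inv G *v g"
  have sP: "symm_mat P" and sG: "symm_mat G"
    using R P by (auto simp: G_def pd_mat_def psd_mat_def intro: symm_mat_gain_matrix)
  have Gw: "G *v w = g"
    using matrix_inv_mult(1)[OF invertible_gain_matrix[OF R P]]
    by (simp add: G_def w_def matrix_vector_mul_assoc)
  have cross: "a \<bullet> (P *v (B *v v)) = g \<bullet> v" for v
  proof -
    have "a \<bullet> (P *v (B *v v)) = (P *v a) \<bullet> (B *v v)"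
      using symm_mat_inner_swap[OF sP, of a "B *v v"] by (simp add: inner_commute)
    then show ?thesis
      by (simp add: g_def dot_lmul_matrix)
  qed
  have "riccati A B R P S' *v x
      = transpose A *v (P *v a) - transpose A *v (P *v (B *v w)) + S' *v x"
    by (simp add: riccati_def matrix_vector_mult_add_rdistrib matrix_vector_mult_diff_rdistrib
        matrix_vector_mul_assoc[symmetric] g_def G_def a_def w_def)
  moreover have "x \<bullet> (transpose A *v y) = a \<bullet> y" for y
    unfolding a_def by (metis dot_lmul_matrix inner_commute transpose_matrix_vector)
  ultimately have ric: "qform (riccati A B R P S') x = qform P a - g \<bullet> w + qform S' x"
    by (simp only: inner_add_right inner_diff_right cross)
  have uw: "u - u\<^sub>0 = u + w"
    by (simp add: u\<^sub>0_def w_def g_def a_def)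
  have "qform G (u + w) = qform G u + 2 * (u \<bullet> g) + w \<bullet> g"
    using symm_mat_inner_swap[OF sG, of w u]
    by (simp add: matrix_vector_right_distrib inner_add_left inner_add_right Gw)
  moreover have "qform P (a + B *v u) = qform P a + 2 * (u \<bullet> g) + qform P (B *v u)"
    using symm_mat_inner_swap[OF sP, of "B *v u" a] cross[of u]
    by (simp add: matrix_vector_right_distrib inner_add_left inner_add_right inner_commute)
  ultimately show ?thesis
    unfolding uw using ric
    by (simp add: bellman_cost_def G_def qform_gain_matrix a_def inner_commute[of w g])
qed

lemma qform_riccati_le_bellman_cost:
  fixes B :: "real^'m^'n" and R :: "real^'m^'m"
  assumes "pd_mat R" "psd_mat P"
  shows "qform (riccati A B R P S') x \<le> bellman_cost A B R P S' x u"
proof -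
  let ?G = "R + transpose B ** P ** B"
  have "0 \<le> qform ?G v" for v
    using assms by (simp add: qform_gain_matrix qform_nonneg_if_psd_mat psd_mat_if_pd_mat)
  then show ?thesis
    using riccati_completion_of_squares[OF assms, where A=A and B=B and x=x and S'=S' and u=u]
    by (metis le_add_same_cancel1)
qed

lemma qform_riccati_eq_bellman_cost:
  fixes B :: "real^'m^'n" and R :: "real^'m^'m"
  assumes "pd_mat R" "psd_mat P"
  obtains u where "qform (riccati A B R P S') x = bellman_cost A B R P S' x u"
proof -
  let ?u = "- (matrix_inv (R + transpose B ** P ** B) *v (transpose B *v (P *v (A *v x))))"
  show thesis
    using that riccati_completion_of_squares[OF assms, where A=A and B=B and x=x and S'=S' and u="?u"]
    by simp
qed

lemma qform_le_qform_riccati: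
  fixes B :: "real^'m^'n" and R :: "real^'m^'m"
  assumes R: "pd_mat R" and P: "psd_mat P"
  shows "qform S x \<le> qform (riccati A B R P S) x"
proof -
  obtain u where "qform (riccati A B R P S) x = bellman_cost A B R P S x u"
    using qform_riccati_eq_bellman_cost[OF R P] by blast
  moreover have "0 \<le> qform P (A *v x + B *v u)" "0 \<le> qform R u"
    using R P by (simp_all add: qform_nonneg_if_psd_mat psd_mat_if_pd_mat)
  ultimately show ?thesis
    unfolding bellman_cost_def by linarith
qed

lemma qform_riccati_lower:
  fixes B :: "real^'m^'n" and R :: "real^'m^'m"
  assumes R: "pd_mat R" and P: "psd_mat P" and Q: "psd_mat Q"
    and c: "0 \<le> c" "c \<le> 1" and QP: "\<forall>y. c * qform Q y \<le> qform P y"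
  shows "c * qform (riccati A B R Q S) x + (1 - c) * qform S x \<le> qform (riccati A B R P S) x"
proof -
  obtain u where u: "qform (riccati A B R P S) x = bellman_cost A B R P S x u"
    using qform_riccati_eq_bellman_cost[OF R P] by blast
  define z where "z = A *v x + B *v u"
  have "c * qform (riccati A B R Q S) x \<le> c * bellman_cost A B R Q S x u"
    using qform_riccati_le_bellman_cost[OF R Q] c(1) by (rule mult_left_mono)
  moreover have "0 \<le> (1 - c) * qform R u"
    using c(2) R by (simp add: qform_nonneg_if_psd_mat psd_mat_if_pd_mat)
  moreover have "c * qform Q z \<le> qform P z"
    using QP by blast
  ultimately show ?thesis
    using u unfolding bellman_cost_def z_def[symmetric] by (simp add: algebra_simps)
qed

lemma qform_riccati_upper:
  fixes B :: "real^'m^'n" and R :: "real^'m^'m"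
  assumes R: "pd_mat R" and P: "psd_mat P" and Q: "psd_mat Q"
    and t: "0 \<le> t" and PQ: "\<forall>y. qform P y \<le> (1 + t) * qform Q y"
  shows "qform (riccati A B R P S) x \<le> (1 + t) * qform (riccati A B R Q S) x - t * qform S x"
proof -
  obtain u where u: "qform (riccati A B R Q S) x = bellman_cost A B R Q S x u"
    using qform_riccati_eq_bellman_cost[OF R Q] by blast
  define z where "z = A *v x + B *v u"
  have "qform (riccati A B R P S) x \<le> bellman_cost A B R P S x u"
    using qform_riccati_le_bellman_cost[OF R P] .
  moreover have "0 \<le> t * qform R u"
    using t R by (simp add: qform_nonneg_if_psd_mat psd_mat_if_pd_mat)
  moreover have "qform P z \<le> (1 + t) * qform Q z"
    using PQ by blast
  ultimately show ?thesis
    using u unfolding bellman_cost_def z_def[symmetric] by (simp add: algebra_simps)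
qed

lemma riccati_rel_contraction:
  fixes B :: "real^'m^'n" and R :: "real^'m^'m"
  assumes R: "pd_mat R" and P: "psd_mat P" and Q: "psd_mat Q" and fixpoint: "riccati A B R Q S = Q"
    and \<kappa>: "\<kappa> \<le> 1" and QS: "\<forall>x. \<kappa> * qform Q x \<le> qform S x"
    and a: "0 \<le> a" and close: "rel_close a Q P"
  shows "rel_close ((1 - \<kappa>) * a) Q (riccati A B R P S)"
  unfolding rel_close_iff
proof (intro allI conjI)
  fix x
  \<comment> \<open>1 - a may be negative, but the lower bound needs a weight in [0, 1]\<close>
  define c where "c = max 0 (1 - a)"
  have c: "0 \<le> c" "c \<le> 1" "1 - a \<le> c"
    using a by (auto simp: c_def)
  have Q0: "0 \<le> qform Q x"
    using Q by (rule qform_nonneg_if_psd_mat)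
  have "\<forall>y. c * qform Q y \<le> qform P y"
    using close P c(3) unfolding rel_close_iff c_def
    by (metis max_def mult_zero_left qform_nonneg_if_psd_mat)
  then have "c * qform Q x + (1 - c) * qform S x \<le> qform (riccati A B R P S) x"
    using qform_riccati_lower[OF R P Q c(1,2)] fixpoint by metis
  moreover have "(1 - c) * (\<kappa> * qform Q x) \<le> (1 - c) * qform S x"
    using c QS by (intro mult_left_mono) auto
  moreover have "(1 - (1 - \<kappa>) * a) * qform Q x \<le> (c + (1 - c) * \<kappa>) * qform Q x"
  proof (rule mult_right_mono[OF _ Q0])
    have "(1 - \<kappa>) * (1 - a) \<le> (1 - \<kappa>) * c"
      using c(3) \<kappa> by (intro mult_left_mono) auto
    then show "1 - (1 - \<kappa>) * a \<le> c + (1 - c) * \<kappa>"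
      by (simp add: algebra_simps)
  qed
  ultimately show "(1 - (1 - \<kappa>) * a) * qform Q x \<le> qform (riccati A B R P S) x"
    by (simp add: algebra_simps)
next
  fix x
  have "\<forall>y. qform P y \<le> (1 + a) * qform Q y"
    using close unfolding rel_close_iff by blast
  then have "qform (riccati A B R P S) x \<le> (1 + a) * qform Q x - a * qform S x"
    using qform_riccati_upper[OF R P Q a] fixpoint by metis
  moreover have "a * (\<kappa> * qform Q x) \<le> a * qform S x"
    using a QS by (intro mult_left_mono) auto
  ultimately show "qform (riccati A B R P S) x \<le> (1 + (1 - \<kappa>) * a) * qform Q x"
    by (simp add: algebra_simps)
qed

section \<open>Inexact value iteration\<close>

lemma inexact_value_iteration_rel_close:
  fixes B :: "real^'m^'n" and R :: "real^'m^'m" and P \<Delta> :: "nat \<Rightarrow> real^'n^'n"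
  assumes R: "pd_mat R" and S: "symm_mat S" and Q: "psd_mat Q" and fixpoint: "riccati A B R Q S = Q"
    and \<kappa>: "0 < \<kappa>" "\<kappa> \<le> 1" and QS: "\<forall>x. \<kappa> * qform Q x \<le> qform S x"
    and \<Delta>: "\<forall>j. symm_mat (\<Delta> j)"
    and \<delta>: "0 \<le> \<delta>" "\<forall>j x. \<bar>qform (\<Delta> j) x\<bar> \<le> \<delta> * qform Q x"
    and S\<Delta>: "\<forall>j x. 0 \<le> qform S x + qform (\<Delta> j) x"
    and P0: "psd_mat (P 0)" "rel_close a Q (P 0)" "0 \<le> a"
    and iteration: "\<forall>j. P (Suc j) = riccati A B R (P j) S + \<Delta> j"
  shows "psd_mat (P j) \<and> rel_close ((1 - \<kappa>) ^ j * a + \<delta> / \<kappa>) Q (P j)"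
proof (induction j)
  case 0
  have "a \<le> a + \<delta> / \<kappa>"
    using \<delta>(1) \<kappa>(1) by simp
  then show ?case
    using P0 rel_close_mono[OF P0(2) _ Q] by simp
next
  case (Suc j)
  let ?a = "(1 - \<kappa>) ^ j * a + \<delta> / \<kappa>"
  have Pj: "psd_mat (P j)" and close: "rel_close ?a Q (P j)"
    using Suc.IH by blast+
  have P_Suc: "P (Suc j) = riccati A B R (P j) S + \<Delta> j"
    using iteration by blast
  have "symm_mat (P (Suc j))"
    using symm_mat_riccati[OF R Pj S] \<Delta> unfolding P_Suc by (simp add: symm_mat_def transpose_add)
  moreover have "0 \<le> qform (P (Suc j)) x" for x
    using qform_le_qform_riccati[OF R Pj, where S=S and x=x and A=A and B=B]
      S\<Delta>[rule_format, where j=j and x=x]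
    unfolding P_Suc qform_add by linarith
  ultimately have "psd_mat (P (Suc j))"
    unfolding psd_mat_def by blast
  have "0 \<le> ?a"
    using \<kappa> \<delta>(1) P0(3) by simp
  then have "rel_close ((1 - \<kappa>) * ?a) Q (riccati A B R (P j) S)"
    using \<kappa> by (intro riccati_rel_contraction[OF R Pj Q fixpoint _ QS _ close]) auto
  then have "rel_close ((1 - \<kappa>) * ?a + \<delta>) Q (P (Suc j))"
    unfolding P_Suc using \<delta>(2) by (intro rel_close_add) auto
  moreover have "(1 - \<kappa>) * ?a + \<delta> = (1 - \<kappa>) ^ Suc j * a + \<delta> / \<kappa>"
    using \<kappa>(1) by (simp add: field_simps)
  ultimately show ?case
    using \<open>psd_mat (P (Suc j))\<close> by simp
qed

lemma inexact_value_iteration_bound: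
  fixes B :: "real^'m^'n" and R :: "real^'m^'m" and P \<Delta> :: "nat \<Rightarrow> real^'n^'n"
  assumes R: "pd_mat R" and S: "pd_mat S" and Ps: "pd_mat Ps" and fixpoint: "riccati A B R Ps S = Ps"
    and \<Delta>: "\<forall>j. symm_mat (\<Delta> j)" "\<forall>j. spec_norm (\<Delta> j) \<le> d" "d < lambda_min S"
    and P0: "psd_mat (P 0)" and iteration: "\<forall>j. P (Suc j) = riccati A B R (P j) S + \<Delta> j"
  defines "\<kappa> \<equiv> lambda_min S / (lambda_min S + spec_norm Ps)"
  shows "spec_norm (P i - Ps)
    \<le> spec_norm Ps / lambda_min Ps * (1 - \<kappa>) ^ i * spec_norm (P 0 - Ps)
      + spec_norm Ps / (lambda_min Ps * \<kappa>) * d"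
proof -
  define q r where "q = lambda_min Ps" and "r = spec_norm (P 0 - Ps)"
  define a where "a i = (1 - \<kappa>) ^ i * (r / q) + d / q / \<kappa>" for i
  have pos: "0 < lambda_min S" "0 < q" "0 < spec_norm Ps" "0 \<le> r" "0 \<le> d"
    using lambda_min_pos[OF S] lambda_min_pos[OF Ps] spec_norm_pos[OF Ps] spec_norm_nonneg[of "P 0 - Ps"]
      order.trans[OF spec_norm_nonneg \<Delta>(2)[rule_format, of 0]]
    by (simp_all add: q_def r_def)
  then have \<kappa>: "0 < \<kappa>" "\<kappa> \<le> 1"
    by (simp_all add: \<kappa>_def)
  have S\<Delta>: "0 \<le> qform S x + qform (\<Delta> j) x" for j x
  proof -
    have "d / lambda_min S * qform S x \<le> qform S x"
      using S \<Delta>(3) pos(1) by (intro mult_left_le_one_le) (auto simp: pd_mat_def psd_mat_if_pd_mat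
          qform_nonneg_if_psd_mat pos(5))
    then show ?thesis
      using abs_qform_le_div_lambda_min[OF S \<Delta>(2)[rule_format, of j], of x] by linarith
  qed
  have "psd_mat (P i) \<and> rel_close (a i) Ps (P i)"
    unfolding a_def q_def r_def
  proof (rule inexact_value_iteration_rel_close[OF R _ psd_mat_if_pd_mat[OF Ps] fixpoint \<kappa> _ \<Delta>(1)])
    show "\<forall>x. \<kappa> * qform Ps x \<le> qform S x"
      unfolding \<kappa>_def using qform_le_lambda_min_ratio[OF S] by blast
    show "\<forall>j x. \<bar>qform (\<Delta> j) x\<bar> \<le> d / lambda_min Ps * qform Ps x"
      using abs_qform_le_div_lambda_min[OF Ps] \<Delta>(2) by blast
  qed (use S S\<Delta> P0 iteration pos rel_close_spec_norm_div_lambda_min[OF Ps] in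
      \<open>auto simp: pd_mat_def q_def r_def\<close>)
  moreover have "0 \<le> a i"
    unfolding a_def using \<kappa> pos by (intro add_nonneg_nonneg mult_nonneg_nonneg divide_nonneg_pos) auto
  ultimately have "spec_norm (P i - Ps) \<le> a i * spec_norm Ps"
    using Ps by (intro spec_norm_le_if_rel_close) (auto simp: pd_mat_def psd_mat_def)
  then show ?thesis
    by (simp add: a_def q_def r_def field_simps)
qed

lemma class_K_linear:
  assumes "0 < (c::real)"
  shows "class_K (\<lambda>r. c * r)"
  using assms unfolding class_K_def strict_mono_on_def by (auto intro!: continuous_intros)

lemma class_KL_geometric:
  assumes c: "0 < (c::real)" and \<rho>: "0 < \<rho>" "\<rho> < 1"
  shows "class_KL (\<lambda>r i. c * \<rho> ^ i * r)"
  unfolding class_KL_def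
proof (intro conjI allI impI)
  show "class_K (\<lambda>r. c * \<rho> ^ i * r)" for i
    using c \<rho>(1) by (intro class_K_linear) simp
  fix r :: real
  assume r: "0 \<le> r"
  show "antimono (\<lambda>i. c * \<rho> ^ i * r)"
    using c r \<rho> by (intro antimonoI mult_right_mono mult_left_mono power_decreasing) auto
  have "(\<lambda>i. c * \<rho> ^ i * r) \<longlonglongrightarrow> c * 0 * r"
    using \<rho> by (intro tendsto_intros LIMSEQ_power_zero) auto
  then show "(\<lambda>i. c * \<rho> ^ i * r) \<longlonglongrightarrow> 0"
    by simp
qed

theorem theorem3:
  fixes A :: "real^'n^'n" and B :: "real^'m^'n" and S :: "real^'n^'n"
    and R :: "real^'m^'m" and Pstar :: "real^'n^'n"
  assumes S: "pd_mat S" and R: "pd_mat R" and AB: "stabilizable A B"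
    and Pstar: "pd_mat Pstar" "Pstar = riccati A B R Pstar S"
  shows "\<exists>\<beta> \<gamma>. class_KL \<beta> \<and> class_K \<gamma> \<and>
    (\<forall>(\<Delta> :: nat \<Rightarrow> real^'n^'n) (P :: nat \<Rightarrow> real^'n^'n).
        (\<forall>i. symm_mat (\<Delta> i)) \<longrightarrow>
        bdd_above (range (\<lambda>i. spec_norm (\<Delta> i))) \<longrightarrow>
        (SUP i. spec_norm (\<Delta> i)) < lambda_min S \<longrightarrow>
        psd_mat (P 0) \<longrightarrow>
        (\<forall>i. P (Suc i) = riccati A B R (P i) S + \<Delta> i) \<longrightarrow>
        (\<forall>i. spec_norm (P i - Pstar)
               \<le> \<beta> (spec_norm (P 0 - Pstar)) i + \<gamma> (SUP i. spec_norm (\<Delta> i))))"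
proof -
  \<comment> \<open>AB only guarantees the existence of Pstar, which is assumed here\<close>
  define \<kappa> where "\<kappa> = lambda_min S / (lambda_min S + spec_norm Pstar)"
  define c where "c = spec_norm Pstar / lambda_min Pstar"
  have "0 < lambda_min S" "0 < spec_norm Pstar" "0 < lambda_min Pstar"
    using S Pstar(1) by (simp_all add: lambda_min_pos spec_norm_pos)
  then have c: "0 < c" and \<kappa>: "0 < \<kappa>" "\<kappa> < 1"
    by (simp_all add: c_def \<kappa>_def)
  have "class_KL (\<lambda>r i. c * (1 - \<kappa>) ^ i * r)"
    using c \<kappa> by (intro class_KL_geometric) auto
  moreover have "class_K (\<lambda>d. c / \<kappa> * d)"
    using c \<kappa> by (intro class_K_linear) simp
  moreover have "spec_norm (P i - Pstar)
      \<le> c * (1 - \<kappa>) ^ i * spec_norm (P 0 - Pstar) + c / \<kappa> * (SUP i. spec_norm (\<Delta> i))"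
    if "\<forall>i. symm_mat (\<Delta> i)" "bdd_above (range (\<lambda>i. spec_norm (\<Delta> i)))"
      "(SUP i. spec_norm (\<Delta> i)) < lambda_min S" "psd_mat (P 0)"
      "\<forall>i. P (Suc i) = riccati A B R (P i) S + \<Delta> i"
    for \<Delta> P :: "nat \<Rightarrow> real^'n^'n" and i
  proof -
    have "\<forall>j. spec_norm (\<Delta> j) \<le> (SUP i. spec_norm (\<Delta> i))"
      using that(2) by (auto intro: cSUP_upper)
    from inexact_value_iteration_bound[OF R S Pstar(1) Pstar(2)[symmetric] that(1) this that(3-5)]
    show ?thesis
      unfolding c_def \<kappa>_def by (simp only: divide_divide_eq_left)
  qed
  ultimately show ?thesis
    by blast
qed

end
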